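(* Let $G$ be a non-compact locally compact (Hausdorff) topological group and let $H$ be a subgroup of $G$ with $\{e\}\subsetneq H$. Then the pair $(G,H)$ is not relatively extremely amenable.
   Context: A $G$-space is a compact Hausdorff space with a continuous action of $G$. The pair $(G,H)$, with $H\subset G$ a subgroup, is relatively extremely amenable if every $G$-space $X$ has an $H$-fixed point, i.e. some $x_0\in X$ with $hx_0=x_0$ for all $h\in H$. *)

theory Defs
  imports "HOL-Analysis.Analysis"
begin

text \<open>Topological groups are modelled by the type class topological_group_add
 (a group_add, not necessarily commutative, with continuous addition and negation);
 the group operation g*h is written g + h, the identity e is 0.\<close>

definition is_subgroup :: "'g::group_add set \<Rightarrow> bool" where
  "is_subgroup H \<longleftrightarrow> 0 \<in> H \<and> (\<forall>x\<in>H. \<forall>y\<in>H. x + y \<in> H) \<and> (\<forall>x\<in>H. - x \<in> H)"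

definition G_space :: "'x topology \<Rightarrow> ('g::topological_group_add \<Rightarrow> 'x \<Rightarrow> 'x) \<Rightarrow> bool" where
  "G_space X a \<longleftrightarrow>
     topspace X \<noteq> {} \<and> compact_space X \<and> Hausdorff_space X \<and>
     (\<forall>g. \<forall>x\<in>topspace X. a g x \<in> topspace X) \<and>
     (\<forall>x\<in>topspace X. a 0 x = x) \<and>
     (\<forall>g h. \<forall>x\<in>topspace X. a (g + h) x = a g (a h x)) \<and>
     continuous_map (prod_topology euclidean X) X (\<lambda>(g, x). a g x)"

text \<open>(G,H) relatively extremely amenable, tested against all G-spaces carried by type 'x.\<close>
definition rel_ext_amenable :: "'x itself \<Rightarrow> 'g::topological_group_add set \<Rightarrow> bool" where
  "rel_ext_amenable _ H \<longleftrightarrow>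
     (\<forall>(X::'x topology) (a::'g \<Rightarrow> 'x \<Rightarrow> 'x). G_space X a \<longrightarrow>
        (\<exists>x0\<in>topspace X. \<forall>h\<in>H. a h x0 = x0))"

end

theory Submission
  imports Defs
begin

(* Relative extreme amenability of (G, H) fails as soon as some h \<in> H, h \<noteq> 0, acts without
   fixed points on some G-space.  For a locally compact Hausdorff group G such a G-space is
   built as follows (a variant of Veech's construction).  Urysohn gives a continuous bump u with
   compact support K, u 0 = 1 and u h = 0; it defines a right-invariant pseudometric
   rho x y = sup_z |u (x + z) - u (y + z)|, continuous by uniform continuity of u.  Take a maximal
   1/4-separated set D of centres (Zorn).  Centres whose difference lies in a certain compact set
   "conflict"; by compactness the conflict graph has bounded degree, hence a finite colouring
   (Zorn again).  The functions min (1, 2 * rho (y, centres of colour k)) form a point \<phi> of the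
   cube [0,1]^(G \<times> nat) that is 2 rho-Lipschitz and such that h moves every y by at least 1/2 in
   some colour k <= n.  These two closed, translation-invariant conditions cut out a compact G-space
   of the cube on which h has no fixed point.

   Non-compactness of G is only needed to make G infinite, so that the
   carrier of the constructed G-space embeds into the type 'g set set used by the statement. *)

unbundle cardinal_syntax

lemma homeomorphic_copy:
  fixes X :: "'y topology" and f :: "'y \<Rightarrow> 'z"
  assumes inj: "inj f"
  shows "homeomorphic_maps X (pullback_topology (f ` topspace X) (inv f) X) f (inv f)"
    and "topspace (pullback_topology (f ` topspace X) (inv f) X) = f ` topspace X"
proof -
  let ?Y = "pullback_topology (f ` topspace X) (inv f) X"
  have gf: "inv f (f x) = x" for x using inj by simp
  show tY: "topspace ?Y = f ` topspace X"
    unfolding topspace_pullback_topology using gf by auto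
  have "continuous_map X ?Y f"
    by (rule continuous_map_pullback') (auto simp: o_def gf)
  moreover have "continuous_map ?Y X (inv f)"
    using continuous_map_pullback[OF continuous_map_id, of "f ` topspace X" "inv f"]
    by (simp add: o_def)
  ultimately show "homeomorphic_maps X ?Y f (inv f)"
    unfolding homeomorphic_maps_def using tY gf by auto
qed

lemma G_space_transfer:
  fixes X :: "'y topology" and a :: "'g::topological_group_add \<Rightarrow> 'y \<Rightarrow> 'y" and f :: "'y \<Rightarrow> 'z"
  assumes G: "G_space X a" and inj: "inj f"
  shows "\<exists>(Y::'z topology) b. G_space Y b \<and>
     (\<forall>k. \<forall>y\<in>topspace Y. b k y = y \<longrightarrow> (\<exists>x\<in>topspace X. a k x = x))"
proof -
  define g where "g = inv f"
  have gf: "g (f x) = x" for x using inj by (simp add: g_def)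
  define Y where "Y = pullback_topology (f ` topspace X) g X"
  have hom: "homeomorphic_maps X Y f g" and tY: "topspace Y = f ` topspace X"
    using homeomorphic_copy[OF inj, of X] by (simp_all add: Y_def g_def)
  then have cf: "continuous_map X Y f" and cg: "continuous_map Y X g"
    unfolding homeomorphic_maps_def by auto
  define b where "b = (\<lambda>k y. f (a k (g y)))"
  have GX: "topspace X \<noteq> {}" "compact_space X" "Hausdorff_space X"
     "\<forall>k. \<forall>x\<in>topspace X. a k x \<in> topspace X"
     "\<forall>x\<in>topspace X. a 0 x = x"
     "\<forall>k l. \<forall>x\<in>topspace X. a (k + l) x = a k (a l x)"
     "continuous_map (prod_topology euclidean X) X (\<lambda>(k, x). a k x)"
    using G unfolding G_space_def by auto
  have "G_space Y b"
    unfolding G_space_def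
  proof (intro conjI)
    have "X homeomorphic_space Y" using hom unfolding homeomorphic_space_def by blast
    then show "compact_space Y" "Hausdorff_space Y"
      using GX homeomorphic_compact_space homeomorphic_Hausdorff_space by blast+
    have "continuous_map (prod_topology euclidean Y) (prod_topology euclidean X) (\<lambda>(k, y). (k, g y))"
      unfolding continuous_map_pairwise case_prod_unfold
      using continuous_map_fst continuous_map_compose[OF continuous_map_snd cg] by (auto simp: o_def)
    from continuous_map_compose[OF continuous_map_compose[OF this GX(7)] cf]
    show "continuous_map (prod_topology euclidean Y) Y (\<lambda>(k, x). b k x)"
      by (simp add: b_def o_def case_prod_unfold)
  qed (use GX tY in \<open>auto simp: b_def gf\<close>)
  moreover have "\<exists>x\<in>topspace X. a k x = x" if y: "y \<in> topspace Y" and fixed: "b k y = y" for k y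
  proof -
    obtain x where x: "x \<in> topspace X" "y = f x" using y tY by auto
    then have "f (a k x) = f x" using fixed by (simp add: b_def gf)
    then show ?thesis using x inj by (auto dest: injD)
  qed
  ultimately show ?thesis by blast
qed

lemma not_rel_ext_amenableI:
  fixes X :: "'y topology" and a :: "'g::topological_group_add \<Rightarrow> 'y \<Rightarrow> 'y" and f :: "'y \<Rightarrow> 'x"
  assumes "G_space X a" "inj f" "h \<in> H" "\<forall>x\<in>topspace X. a h x \<noteq> x"
  shows "\<not> rel_ext_amenable TYPE('x) H"
proof
  assume "rel_ext_amenable TYPE('x) H"
  moreover obtain Y :: "'x topology" and b where Y: "G_space Y b"
    "\<forall>k. \<forall>y\<in>topspace Y. b k y = y \<longrightarrow> (\<exists>x\<in>topspace X. a k x = x)"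
    using G_space_transfer[OF assms(1,2)] by blast
  ultimately obtain y where "y \<in> topspace Y" "\<forall>k\<in>H. b k y = y"
    unfolding rel_ext_amenable_def by blast
  then show False using Y(2) assms(3,4) by blast
qed

lemma inj_rat_cut: "inj (\<lambda>t::real. to_nat ` {q::rat. of_rat q < t})"
proof (rule injI)
  fix s t :: real
  assume "to_nat ` {q::rat. of_rat q < s} = to_nat ` {q::rat. of_rat q < t}"
  then have cut: "{q::rat. of_rat q < s} = {q::rat. of_rat q < t}"
    by (simp add: inj_image_eq_iff)
  show "s = t"
  proof (rule ccontr)
    assume "s \<noteq> t"
    then have "min s t < max s t" by linarith
    then obtain q where "min s t < of_rat q" "of_rat q < max s t"
      using of_rat_dense by blast
    then have "of_rat q < s \<longleftrightarrow> \<not> of_rat q < t" by (auto simp: min_def max_def split: if_splits)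
    then show False using cut by blast
  qed
qed

lemma inj_times_nat:
  assumes "infinite (UNIV :: 'g set)"
  shows "\<exists>j :: 'g \<times> nat \<Rightarrow> 'g. inj j"
proof -
  have "|UNIV::nat set| \<le>o |UNIV::'g set|"
    using infinite_iff_card_of_nat assms by blast
  then have "|(UNIV::'g set) \<times> (UNIV::nat set)| \<le>o |(UNIV::'g set) \<times> (UNIV::'g set)|"
    by (rule card_of_Times_mono2)
  moreover have "|(UNIV::'g set) \<times> (UNIV::'g set)| =o |UNIV::'g set|"
    by (rule card_of_Times_same_infinite[OF assms])
  ultimately have "|(UNIV::'g set) \<times> (UNIV::nat set)| \<le>o |UNIV::'g set|"
    by (rule ordLeq_ordIso_trans)
  then show ?thesis
    using card_of_ordLeq[of "(UNIV::'g set) \<times> (UNIV::nat set)" "UNIV::'g set"]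
    by (auto simp: UNIV_Times_UNIV)
qed

(* Real-valued functions on 'g \<times> nat embed into the subsets of an infinite type 'g:
   encode each value by its cut and the resulting graph in ('g \<times> nat) \<times> nat by an
   injection into 'g. *)
lemma inj_functions_into_Pow:
  assumes "infinite (UNIV :: 'g set)"
  shows "\<exists>c :: ('g \<times> nat \<Rightarrow> real) \<Rightarrow> 'g set. inj c"
proof -
  obtain j :: "'g \<times> nat \<Rightarrow> 'g" where j: "inj j" using inj_times_nat[OF assms] by blast
  define J where "J = (\<lambda>(p, n). j (j p, n))"
  have "inj J" unfolding J_def by (auto intro!: injI dest!: injD[OF j])
  define cut where "cut = (\<lambda>t::real. to_nat ` {q::rat. of_rat q < t})"
  define c where "c \<phi> = J ` {(p, n). n \<in> cut (\<phi> p)}" for \<phi> :: "'g \<times> nat \<Rightarrow> real"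
  have "\<phi> = \<psi>" if "c \<phi> = c \<psi>" for \<phi> \<psi>
  proof
    fix p
    have "{(p, n). n \<in> cut (\<phi> p)} = {(p, n). n \<in> cut (\<psi> p)}"
      using that \<open>inj J\<close> by (simp add: c_def inj_image_eq_iff)
    then have "cut (\<phi> p) = cut (\<psi> p)" by (cases p) (auto simp: set_eq_iff)
    then show "\<phi> p = \<psi> p" using inj_rat_cut by (auto simp: cut_def dest: injD)
  qed
  then have "inj c" by (rule injI)
  then show ?thesis by blast
qed

(* Zorn: a maximal e-separated set for a symmetric, reflexively small function is e-dense. *)
lemma maximal_separated_set:
  fixes r :: "'a \<Rightarrow> 'a \<Rightarrow> real"
  assumes refl: "\<And>x. r x x < e" and sym: "\<And>x y. r x y = r y x"
  shows "\<exists>D. (\<forall>d\<in>D. \<forall>d'\<in>D. d \<noteq> d' \<longrightarrow> e \<le> r d d') \<and> (\<forall>y. \<exists>d\<in>D. r y d < e)"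
proof -
  define A where "A = {D. \<forall>d\<in>D. \<forall>d'\<in>D. d \<noteq> d' \<longrightarrow> e \<le> r d d'}"
  have "\<Union>C \<in> A" if C: "C \<in> chains A" for C
    unfolding A_def
  proof (intro CollectI ballI impI)
    fix d d' assume d: "d \<in> \<Union>C" and d': "d' \<in> \<Union>C" and ne: "d \<noteq> d'"
    obtain D1 D2 where "D1 \<in> C" "D2 \<in> C" "d \<in> D1" "d' \<in> D2" using d d' by blast
    moreover have "D1 \<subseteq> D2 \<or> D2 \<subseteq> D1"
      using C calculation unfolding chains_def chain_subset_def by blast
    moreover have "D1 \<in> A" "D2 \<in> A" using C calculation unfolding chains_def by blast+
    ultimately show "e \<le> r d d'" using ne unfolding A_def by blast
  qed
  then obtain M where M: "M \<in> A" "\<forall>X\<in>A. M \<subseteq> X \<longrightarrow> X = M"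
    using Zorn_Lemma by blast
  have "\<exists>d\<in>M. r y d < e" for y
  proof (rule ccontr)
    assume "\<not> (\<exists>d\<in>M. r y d < e)"
    then have far: "\<forall>d\<in>M. e \<le> r y d" by auto
    then have "insert y M \<in> A" using M(1) unfolding A_def by (auto simp: sym)
    then have "y \<in> M" using M(2) by blast
    then show False using far refl[of y] by force
  qed
  then show ?thesis using M(1) unfolding A_def by blast
qed

definition proper_partial_colouring :: "('a \<Rightarrow> 'a \<Rightarrow> bool) \<Rightarrow> 'a set \<Rightarrow> nat \<Rightarrow> ('a \<times> nat) set \<Rightarrow> bool"
  where "proper_partial_colouring E D n P \<longleftrightarrow> P \<subseteq> D \<times> {..n} \<and>
     (\<forall>a i b j. (a, i) \<in> P \<longrightarrow> (b, j) \<in> P \<longrightarrow> (a = b \<longrightarrow> i = j) \<and> (E a b \<longrightarrow> i \<noteq> j))"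

lemma proper_partial_colouringI:
  assumes "P \<subseteq> D \<times> {..n}"
    and "\<And>a i b j. (a, i) \<in> P \<Longrightarrow> (b, j) \<in> P \<Longrightarrow> (a = b \<longrightarrow> i = j) \<and> (E a b \<longrightarrow> i \<noteq> j)"
  shows "proper_partial_colouring E D n P"
  unfolding proper_partial_colouring_def using assms by simp

lemma proper_partial_colouringD:
  assumes "proper_partial_colouring E D n P" "(a, i) \<in> P" "(b, j) \<in> P"
  shows "a \<in> D" "i \<le> n" "a = b \<Longrightarrow> i = j" "E a b \<Longrightarrow> i \<noteq> j"
proof -
  have "P \<subseteq> D \<times> {..n}"
    and all: "\<And>a i b j. (a, i) \<in> P \<Longrightarrow> (b, j) \<in> P \<Longrightarrow> (a = b \<longrightarrow> i = j) \<and> (E a b \<longrightarrow> i \<noteq> j)"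
    using assms(1) unfolding proper_partial_colouring_def by simp_all
  then show "a \<in> D" "i \<le> n" using assms(2) by auto
  show "a = b \<Longrightarrow> i = j" "E a b \<Longrightarrow> i \<noteq> j" using all[OF assms(2,3)] by simp_all
qed

lemma proper_partial_colouring_chain:
  assumes C: "C \<in> chains {P. proper_partial_colouring E D n P}"
  shows "proper_partial_colouring E D n (\<Union>C)"
proof (rule proper_partial_colouringI)
  have proper: "proper_partial_colouring E D n P" if "P \<in> C" for P
    using C that unfolding chains_def by blast
  show "\<Union>C \<subseteq> D \<times> {..n}"
  proof
    fix x assume "x \<in> \<Union>C"
    then obtain P where "P \<in> C" "x \<in> P" by blast
    then show "x \<in> D \<times> {..n}"
      using proper[of P] proper_partial_colouringD(1,2)[of E D n P "fst x" "snd x" "fst x" "snd x"]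
      by (simp add: mem_Times_iff)
  qed
  fix a i b j assume "(a, i) \<in> \<Union>C" "(b, j) \<in> \<Union>C"
  then obtain P1 P2 where P: "P1 \<in> C" "P2 \<in> C" "(a, i) \<in> P1" "(b, j) \<in> P2" by blast
  then have "P1 \<subseteq> P2 \<or> P2 \<subseteq> P1" using C unfolding chains_def chain_subset_def by blast
  then obtain P where "P \<in> C" "(a, i) \<in> P" "(b, j) \<in> P" using P by blast
  then show "(a = b \<longrightarrow> i = j) \<and> (E a b \<longrightarrow> i \<noteq> j)"
    using proper proper_partial_colouringD(3,4) by metis
qed

lemma free_colour:
  assumes "finite U" "card U \<le> n"
  shows "\<exists>i\<le>n. i \<notin> U"
proof (rule ccontr)
  assume "\<not> ?thesis"
  then have "{..n} \<subseteq> U" by auto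
  then have "card {..n} \<le> card U" using assms(1) by (rule card_mono[rotated])
  then show False using assms(2) by simp
qed

lemma proper_partial_colouring_extend:
  assumes P: "proper_partial_colouring E D n P" and d: "d \<in> D" "d \<notin> Domain P"
    and sym: "\<And>x y. E x y \<Longrightarrow> E y x" and irrefl: "\<And>x. \<not> E x x"
    and deg: "finite {d'\<in>D. E d d'}" "card {d'\<in>D. E d d'} \<le> n"
  shows "\<exists>i. proper_partial_colouring E D n (insert (d, i) P)"
proof -
  define Used where "Used = {j. \<exists>c. (c, j) \<in> P \<and> E d c}"
  define colour_of where "colour_of c = (SOME j. (c, j) \<in> P)" for c
  have "Used \<subseteq> colour_of ` {d'\<in>D. E d d'}"
  proof
    fix j assume "j \<in> Used"
    then obtain c where c: "(c, j) \<in> P" "E d c" unfolding Used_def by blast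
    have "(c, colour_of c) \<in> P" using c(1) unfolding colour_of_def by (rule someI)
    then have "colour_of c = j" using proper_partial_colouringD(3)[OF P _ c(1)] by blast
    moreover have "c \<in> D" using proper_partial_colouringD(1)[OF P c(1) c(1)] .
    ultimately show "j \<in> colour_of ` {d'\<in>D. E d d'}" using c(2) by blast
  qed
  moreover have fin: "finite (colour_of ` {d'\<in>D. E d d'})" using deg(1) by simp
  ultimately have "finite Used" by (rule finite_subset)
  have "card Used \<le> card (colour_of ` {d'\<in>D. E d d'})"
    using card_mono[OF fin] \<open>Used \<subseteq> _\<close> .
  also have "\<dots> \<le> n" using card_image_le[OF deg(1), of colour_of] deg(2) by linarith
  finally have "card Used \<le> n" .
  then obtain i where i: "i \<le> n" "i \<notin> Used" using free_colour \<open>finite Used\<close> by blast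
  have "proper_partial_colouring E D n (insert (d, i) P)"
  proof (rule proper_partial_colouringI)
    show "insert (d, i) P \<subseteq> D \<times> {..n}"
      using P d i unfolding proper_partial_colouring_def by auto
  next
    fix a j b k assume a: "(a, j) \<in> insert (d, i) P" and b: "(b, k) \<in> insert (d, i) P"
    have new: "c \<noteq> d \<and> (E d c \<longrightarrow> l \<noteq> i)" if "(c, l) \<in> P" for c l
      using that d(2) i(2) unfolding Used_def by blast
    show "(a = b \<longrightarrow> j = k) \<and> (E a b \<longrightarrow> j \<noteq> k)"
    proof (cases "(a, j) \<in> P \<and> (b, k) \<in> P")
      case True
      then show ?thesis using proper_partial_colouringD(3,4)[OF P] by blast
    next
      case False
      then show ?thesis using a b new[of a j] new[of b k] sym[of a b] irrefl[of a] by auto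
    qed
  qed
  then show ?thesis by blast
qed

(* A graph of degree at most n is (n + 1)-colourable (Zorn's lemma on partial colourings). *)
lemma bounded_degree_colouring:
  fixes E :: "'a \<Rightarrow> 'a \<Rightarrow> bool"
  assumes sym: "\<And>x y. E x y \<Longrightarrow> E y x" and irrefl: "\<And>x. \<not> E x x"
    and deg: "\<And>d. d \<in> D \<Longrightarrow> finite {d'\<in>D. E d d'} \<and> card {d'\<in>D. E d d'} \<le> n"
  shows "\<exists>col. (\<forall>d\<in>D. col d \<le> n) \<and> (\<forall>d\<in>D. \<forall>d'\<in>D. E d d' \<longrightarrow> col d \<noteq> col d')"
proof -
  have "\<forall>C\<in>chains {P. proper_partial_colouring E D n P}. \<Union>C \<in> {P. proper_partial_colouring E D n P}"
    using proper_partial_colouring_chain by blast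
  from Zorn_Lemma[OF this] obtain M where M: "proper_partial_colouring E D n M"
    "\<And>X. proper_partial_colouring E D n X \<Longrightarrow> M \<subseteq> X \<Longrightarrow> X = M"
    by blast
  have total: "d \<in> Domain M" if d: "d \<in> D" for d
  proof (rule ccontr)
    assume nd: "d \<notin> Domain M"
    obtain i where "proper_partial_colouring E D n (insert (d, i) M)"
      using proper_partial_colouring_extend[OF M(1) d nd sym irrefl] deg[OF d] by blast
    then have "(d, i) \<in> M" using M(2) by blast
    then show False using nd by blast
  qed
  define col where "col d = (SOME i. (d, i) \<in> M)" for d
  have col: "(d, col d) \<in> M" if "d \<in> D" for d
    using total[OF that] unfolding col_def by (metis DomainE someI_ex)
  show ?thesis
    using proper_partial_colouringD(2,4)[OF M(1) col col] by blast
qed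

(* Group identity behind the decomposition d' - d = a + h + b in C0_mem below. *)
lemma diff_add_diff_eq:
  fixes x p q z :: "'a::group_add"
  shows "x - (p + q) + p + (q - z) = x - z"
proof -
  have "x - (p + q) + p + (q - z) = x + (- q + - p) + p + (q + - z)"
    by (simp only: diff_conv_add_uminus minus_add)
  also have "\<dots> = x + (- q + (- p + (p + (q + - z))))" by (simp only: add.assoc)
  also have "\<dots> = x - z" by (simp only: minus_add_cancel diff_conv_add_uminus)
  finally show ?thesis .
qed

definition unit_cube :: "('i \<Rightarrow> real) topology" where
  "unit_cube = product_topology (\<lambda>_. top_of_set {0..1}) UNIV"

lemma topspace_unit_cube: "\<psi> \<in> topspace unit_cube \<longleftrightarrow> (\<forall>q. 0 \<le> \<psi> q \<and> \<psi> q \<le> 1)"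
  by (simp add: unit_cube_def PiE_UNIV_domain Pi_iff)

lemma compact_space_unit_cube: "compact_space unit_cube"
  unfolding unit_cube_def compact_space_product_topology by (simp add: compact_space_subtopology)

lemma Hausdorff_space_unit_cube: "Hausdorff_space unit_cube"
  unfolding unit_cube_def Hausdorff_space_product_topology by (simp add: Hausdorff_space_subtopology)

lemma continuous_map_unit_cube_coordinate: "continuous_map unit_cube euclideanreal (\<lambda>\<psi>. \<psi> q)"
proof -
  have "continuous_map unit_cube (top_of_set {0..1}) (\<lambda>\<psi>. \<psi> q)"
    unfolding unit_cube_def by (rule continuous_map_product_projection) simp
  then show ?thesis by (simp add: continuous_map_in_subtopology)
qed

lemma continuous_map_into_unit_cube:
  assumes "f \<in> topspace X \<rightarrow> topspace unit_cube"
    and "\<And>q. continuous_map X euclideanreal (\<lambda>x. f x q)"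
  shows "continuous_map X unit_cube f"
  unfolding unit_cube_def continuous_map_componentwise_UNIV
proof
  fix q
  have "(\<lambda>x. f x q) ` topspace X \<subseteq> {0..1}"
    using assms(1) unfolding topspace_unit_cube Pi_iff by auto
  then show "continuous_map X (top_of_set {0..1}) (\<lambda>x. f x q)"
    using assms(2) by (simp add: continuous_map_in_subtopology image_subset_iff_funcset)
qed

lemma continuous_map_real_epsilon:
  fixes f :: "'a \<Rightarrow> real"
  assumes "\<And>x e. x \<in> topspace X \<Longrightarrow> e > 0 \<Longrightarrow>
             \<exists>U. openin X U \<and> x \<in> U \<and> (\<forall>y\<in>U. \<bar>f y - f x\<bar> < e)"
  shows "continuous_map X euclideanreal f"
proof -
  have "continuous_map X Met_TC.mtopology f"
    unfolding Met_TC.continuous_map_to_metric using assms by (simp add: dist_real_def abs_minus_commute)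
  then show ?thesis by simp
qed

definition shift :: "'g::group_add \<Rightarrow> ('g \<times> 'i \<Rightarrow> real) \<Rightarrow> 'g \<times> 'i \<Rightarrow> real" where
  "shift g \<psi> = (\<lambda>q. \<psi> (fst q + g, snd q))"

lemma shift_apply [simp]: "shift g \<psi> (x, k) = \<psi> (x + g, k)"
  by (simp add: shift_def)

locale bump =
  fixes u :: "'g::{topological_group_add,t2_space} \<Rightarrow> real" and K :: "'g set" and h :: 'g
  assumes u_cont: "continuous_on UNIV u"
    and u01: "\<And>x. 0 \<le> u x \<and> u x \<le> 1"
    and u0: "u 0 = 1" and uh: "u h = 0"
    and K: "compact K" and uK: "\<And>x. u x \<noteq> 0 \<Longrightarrow> x \<in> K"
begin

lemma continuity_nbhd:
  assumes e: "e > 0"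
  shows "\<exists>Q. open Q \<and> (0::'g) \<in> Q \<and> (\<forall>a\<in>Q. \<forall>b\<in>Q. \<bar>u (a + b + p) - u p\<bar> < e)"
proof -
  define W where "W = {q::'g \<times> 'g. \<bar>u (fst q + snd q + p) - u p\<bar> < e}"
  have "continuous_on UNIV (\<lambda>q::'g \<times> 'g. u (fst q + snd q + p))"
    by (intro continuous_on_compose2[OF u_cont] continuous_intros) auto
  then have "continuous_on UNIV (\<lambda>q::'g \<times> 'g. \<bar>u (fst q + snd q + p) - u p\<bar>)"
    by (intro continuous_intros)
  then have "open W" unfolding W_def
    using open_Collect_less[of "\<lambda>q::'g \<times> 'g. \<bar>u (fst q + snd q + p) - u p\<bar>" "\<lambda>_. e"]
    by (simp add: continuous_on_const)
  moreover have "(0, 0) \<in> W" using e by (simp add: W_def)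
  ultimately obtain A B where AB: "open A" "open B" "0 \<in> A" "0 \<in> B" "A \<times> B \<subseteq> W"
    by (metis open_prod_elim mem_Times_iff fst_conv snd_conv)
  show ?thesis
    by (rule exI[of _ "A \<inter> B"]) (use AB in \<open>auto simp: W_def\<close>)
qed

(* A symmetric neighbourhood N of 0 such that translating by N moves u by less than e on K:
   cover K by finitely many translates of the neighbourhoods from continuity_nbhd. *)
lemma uniformly_continuous_on_support:
  assumes e: "e > 0"
  shows "\<exists>N. open N \<and> (0::'g) \<in> N \<and> (\<forall>w\<in>N. - w \<in> N) \<and>
           (\<forall>w\<in>N. \<forall>z\<in>K. \<bar>u (w + z) - u z\<bar> < e)"
proof -
  have "\<forall>p. \<exists>Q. open Q \<and> (0::'g) \<in> Q \<and> (\<forall>a\<in>Q. \<forall>b\<in>Q. \<bar>u (a + b + p) - u p\<bar> < e/2)"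
    using continuity_nbhd[of "e/2"] e by simp
  then obtain Q where Q: "\<And>p. open (Q p) \<and> (0::'g) \<in> Q p \<and>
      (\<forall>a\<in>Q p. \<forall>b\<in>Q p. \<bar>u (a + b + p) - u p\<bar> < e/2)"
    by (metis choice)
  define S where "S p = Q p \<inter> uminus -` Q p" for p
  have S_open: "open (S p)" for p
    unfolding S_def using Q[of p]
    by (intro open_Int) (auto intro!: open_vimage continuous_on_minus continuous_on_id)
  have S0: "0 \<in> S p" for p using Q[of p] by (simp add: S_def)
  define C where "C p = (\<lambda>x. x - p) -` S p" for p
  have C_open: "open (C p)" for p
    unfolding C_def by (rule open_vimage[OF S_open]) (intro continuous_intros)
  have "z \<in> C z" for z using S0[of z] by (simp add: C_def)
  then have cover: "K \<subseteq> (\<Union>p\<in>K. C p)" by blast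
  obtain P where P: "P \<subseteq> K" "finite P" "K \<subseteq> (\<Union>p\<in>P. C p)"
    using compactE_image[OF K, of K C] C_open cover by blast
  define N where "N = (\<Inter>p\<in>P. S p)"
  have "\<bar>u (w + z) - u z\<bar> < e" if w: "w \<in> N" and z: "z \<in> K" for w z
  proof -
    obtain p where p: "p \<in> P" "z - p \<in> S p" using P(3) z by (auto simp: C_def)
    then have "w \<in> Q p" "z - p \<in> Q p" using w by (auto simp: N_def S_def)
    then have "\<bar>u (w + (z - p) + p) - u p\<bar> < e/2" "\<bar>u (0 + (z - p) + p) - u p\<bar> < e/2"
      using Q[of p] by blast+
    moreover have "w + (z - p) + p = w + z" by (simp add: add.assoc)
    ultimately have "\<bar>u (w + z) - u p\<bar> < e/2" "\<bar>u z - u p\<bar> < e/2" by simp_all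
    then show ?thesis by linarith
  qed
  moreover have "- w \<in> N" if "w \<in> N" for w using that by (auto simp: N_def S_def)
  moreover have "open N" unfolding N_def using P(2) S_open by (intro open_INT) auto
  moreover have "0 \<in> N" using S0 by (simp add: N_def)
  ultimately show ?thesis by blast
qed

(* Uniform continuity of u for left translation: outside K \<union> (K - w) both values vanish, and
   the case w + z \<in> K reduces to z \<in> K by the symmetry of N. *)
lemma uniformly_continuous:
  assumes e: "e > 0"
  shows "\<exists>N. open N \<and> (0::'g) \<in> N \<and> (\<forall>w\<in>N. \<forall>z. \<bar>u (w + z) - u z\<bar> < e)"
proof -
  obtain N where N: "open N" "0 \<in> N" "\<And>w. w \<in> N \<Longrightarrow> - w \<in> N"
    and near_K: "\<And>w z. w \<in> N \<Longrightarrow> z \<in> K \<Longrightarrow> \<bar>u (w + z) - u z\<bar> < e"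
    using uniformly_continuous_on_support[OF e] by blast
  have "\<bar>u (w + z) - u z\<bar> < e" if w: "w \<in> N" for w z
  proof -
    consider "z \<in> K" | "w + z \<in> K" | "z \<notin> K" "w + z \<notin> K" by blast
    then show ?thesis
    proof cases
      case 2
      have "- w + (w + z) = z" by (simp add: add.assoc[symmetric])
      then show ?thesis using near_K[OF N(3)[OF w] 2] by (simp add: abs_minus_commute)
    next
      case 3
      then have "u z = 0" "u (w + z) = 0" using uK by blast+
      then show ?thesis using e by simp
    qed (rule near_K[OF w])
  qed
  then show ?thesis using N(1,2) by blast
qed

definition rho :: "'g \<Rightarrow> 'g \<Rightarrow> real" where
  "rho x y = (SUP z. \<bar>u (x + z) - u (y + z)\<bar>)"

lemma rho_bdd: "bdd_above (range (\<lambda>z. \<bar>u (x + z) - u (y + z)\<bar>))"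
proof (rule bdd_aboveI2[where M=1])
  fix z show "\<bar>u (x + z) - u (y + z)\<bar> \<le> 1" using u01[of "x + z"] u01[of "y + z"] by linarith
qed

lemma rho_ge: "\<bar>u (x + z) - u (y + z)\<bar> \<le> rho x y"
  unfolding rho_def by (rule cSUP_upper[OF UNIV_I rho_bdd])

lemma rho_le: "(\<And>z. \<bar>u (x + z) - u (y + z)\<bar> \<le> c) \<Longrightarrow> rho x y \<le> c"
  unfolding rho_def by (rule cSUP_least) auto

lemma rho_nonneg: "0 \<le> rho x y"
  using rho_ge[of x 0 y] by linarith

lemma rho_le1: "rho x y \<le> 1"
proof (rule rho_le)
  fix z show "\<bar>u (x + z) - u (y + z)\<bar> \<le> 1" using u01[of "x + z"] u01[of "y + z"] by linarith
qed

lemma rho_refl: "rho x x = 0"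
  using rho_nonneg[of x x] rho_le[of x x 0] by simp

lemma rho_sym: "rho x y = rho y x"
proof -
  have "rho x y \<le> rho y x" by (rule rho_le) (metis abs_minus_commute rho_ge)
  moreover have "rho y x \<le> rho x y" by (rule rho_le) (metis abs_minus_commute rho_ge)
  ultimately show ?thesis by simp
qed

lemma rho_tri: "rho x z \<le> rho x y + rho y z"
proof (rule rho_le)
  fix w
  have "\<bar>u (x + w) - u (z + w)\<bar> \<le> \<bar>u (x + w) - u (y + w)\<bar> + \<bar>u (y + w) - u (z + w)\<bar>"
    by linarith
  also have "\<dots> \<le> rho x y + rho y z" using rho_ge[of x w y] rho_ge[of y w z] by linarith
  finally show "\<bar>u (x + w) - u (z + w)\<bar> \<le> rho x y + rho y z" .
qed

lemma rho_inv: "rho (x + k) (y + k) = rho x y"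
proof -
  have "rho (x + k) (y + k) \<le> rho x y"
  proof (rule rho_le)
    fix z show "\<bar>u (x + k + z) - u (y + k + z)\<bar> \<le> rho x y"
      using rho_ge[of x "k + z" y] by (simp add: add.assoc)
  qed
  moreover have "rho x y \<le> rho (x + k) (y + k)"
  proof (rule rho_le)
    fix z
    have "x + k + (- k + z) = x + z" "y + k + (- k + z) = y + z" by (simp_all add: add.assoc)
    then show "\<bar>u (x + z) - u (y + z)\<bar> \<le> rho (x + k) (y + k)"
      using rho_ge[of "x + k" "- k + z" "y + k"] by simp
  qed
  ultimately show ?thesis by simp
qed

lemma rho_shift: "rho x y = rho (x - y) 0"
  using rho_inv[of "x - y" y 0] by simp

lemma rho_h: "rho h 0 = 1"
  using rho_ge[of h 0 0] rho_le1[of h 0] u0 uh by simp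

lemma rho_K: "rho y 0 < 1 \<Longrightarrow> y \<in> K"
  using rho_ge[of y 0 0] u0 uK[of y] by fastforce

(* rho is continuous: its open balls are open, by uniform continuity of u. *)
lemma rho_small:
  assumes "e > 0" shows "\<exists>N. open N \<and> 0 \<in> N \<and> (\<forall>w\<in>N. rho w 0 < e)"
proof -
  obtain N where N: "open N" "0 \<in> N" "\<forall>w\<in>N. \<forall>z. \<bar>u (w + z) - u z\<bar> < e/2"
    using uniformly_continuous[of "e/2"] assms by auto
  have "rho w 0 \<le> e/2" if "w \<in> N" for w
    by (rule rho_le) (use N that in \<open>auto intro: less_imp_le\<close>)
  then show ?thesis using N assms by (intro exI[of _ N]) force
qed

lemma rho_ball_open: "open {v. rho v c < r}"
proof (rule Topological_Spaces.openI)
  fix v assume "v \<in> {v. rho v c < r}"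
  then have e: "r - rho v c > 0" by simp
  obtain N where N: "open N" "0 \<in> N" "\<forall>w\<in>N. rho w 0 < r - rho v c"
    using rho_small[OF e] by auto
  define V where "V = (\<lambda>x. x - v) -` N"
  have "open V" unfolding V_def by (rule open_vimage[OF N(1)]) (intro continuous_intros)
  moreover have "v \<in> V" using N by (simp add: V_def)
  moreover have "V \<subseteq> {v. rho v c < r}"
  proof
    fix x assume "x \<in> V"
    then have "rho x v < r - rho v c" using N by (simp add: V_def rho_shift[of x v])
    then show "x \<in> {v. rho v c < r}" using rho_tri[of x c v] by simp
  qed
  ultimately show "\<exists>T. open T \<and> v \<in> T \<and> T \<subseteq> {v. rho v c < r}" by blast
qed

(* The compact set of differences d' - d for which a point near d (within distance 1/4)
   can be moved by h to a point near d' (within distance 1/2), together with its inverse. *)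
definition C0 :: "'g set" where "C0 = (\<lambda>q. fst q + h + snd q) ` (K \<times> K)"
definition C1 :: "'g set" where "C1 = C0 \<union> uminus ` C0"

lemma C1_compact: "compact C1"
proof -
  have "compact C0" unfolding C0_def
    by (intro compact_continuous_image compact_Times K continuous_intros)
  then show ?thesis unfolding C1_def
    by (intro compact_Un compact_continuous_image continuous_intros)
qed

lemma C0_mem:
  assumes "rho y d < 1/4" "rho (h + y) d' < 1/2"
  shows "d' - d \<in> C0"
proof -
  have "rho (d' - (h + y)) 0 < 1" using assms(2) rho_shift[of d' "h + y"] rho_sym by simp
  moreover have "rho (y - d) 0 < 1" using assms(1) rho_shift[of y d] by simp
  ultimately have "(d' - (h + y), y - d) \<in> K \<times> K" using rho_K by simp
  moreover have "d' - d = (\<lambda>q. fst q + h + snd q) (d' - (h + y), y - d)"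
    by (simp add: diff_add_diff_eq)
  ultimately show ?thesis unfolding C0_def by (rule image_eqI[rotated])
qed

definition conflict :: "'g \<Rightarrow> 'g \<Rightarrow> bool" where
  "conflict d d' \<longleftrightarrow> d \<noteq> d' \<and> d' - d \<in> C1"

lemma conflict_irrefl: "\<not> conflict d d"
  unfolding conflict_def by simp

lemma C1_uminus: "x \<in> C1 \<Longrightarrow> - x \<in> C1"
  unfolding C1_def by force

lemma conflict_sym: "conflict d d' \<Longrightarrow> conflict d' d"
  unfolding conflict_def using C1_uminus[of "d' - d"] by (auto simp: minus_diff_eq)

lemma conflict_degree_bound:
  assumes sep: "\<forall>d\<in>D. \<forall>d'\<in>D. d \<noteq> d' \<longrightarrow> 1/4 \<le> rho d d'"
    and Ctr: "finite Ctr" "C1 \<subseteq> (\<Union>c\<in>Ctr. {v. rho v c < 1/8})"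
  shows "finite {d'\<in>D. conflict d d'} \<and> card {d'\<in>D. conflict d d'} \<le> card Ctr"
proof -
  define Nb where "Nb = {d'\<in>D. conflict d d'}"
  define m where "m d' = (SOME c. c \<in> Ctr \<and> rho (d' - d) c < 1/8)" for d'
  have m: "m d' \<in> Ctr \<and> rho (d' - d) (m d') < 1/8" if "d' \<in> Nb" for d'
  proof -
    have "d' - d \<in> C1" using that by (simp add: Nb_def conflict_def)
    then have "\<exists>c. c \<in> Ctr \<and> rho (d' - d) c < 1/8" using Ctr(2) by blast
    then show ?thesis unfolding m_def by (rule someI_ex)
  qed
  have "inj_on m Nb"
  proof (rule inj_onI)
    fix x y assume x: "x \<in> Nb" and y: "y \<in> Nb" and e: "m x = m y"
    have "rho (x - d) (y - d) \<le> rho (x - d) (m x) + rho (m x) (y - d)" by (rule rho_tri)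
    also have "\<dots> < 1/4" using m[OF x] m[OF y] e rho_sym[of "m y" "y - d"] by simp
    finally have "rho x y < 1/4" using rho_inv[of x "- d" y] by simp
    then show "x = y" using sep x y unfolding Nb_def by force
  qed
  moreover have "m ` Nb \<subseteq> Ctr" using m by blast
  ultimately show ?thesis
    using inj_on_finite card_inj_on_le Ctr(1) unfolding Nb_def by metis
qed

(* Cover C1 by finitely many small balls; then the conflict graph has bounded degree and is
   finitely colourable. *)
lemma conflict_graph_colouring:
  assumes sep: "\<forall>d\<in>D. \<forall>d'\<in>D. d \<noteq> d' \<longrightarrow> 1/4 \<le> rho d d'"
  shows "\<exists>(n::nat) col. (\<forall>d\<in>D. col d \<le> n) \<and> (\<forall>d\<in>D. \<forall>d'\<in>D. conflict d d' \<longrightarrow> col d \<noteq> col d')"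
proof -
  define ball where "ball c = {v. rho v c < 1/8}" for c
  have "C1 \<subseteq> (\<Union>c\<in>C1. ball c)" using rho_refl by (auto simp: ball_def)
  then obtain Ctr where Ctr: "Ctr \<subseteq> C1" "finite Ctr" "C1 \<subseteq> (\<Union>c\<in>Ctr. ball c)"
    using compactE_image[OF C1_compact, of C1 ball] rho_ball_open unfolding ball_def by blast
  have deg: "finite {d'\<in>D. conflict d d'} \<and> card {d'\<in>D. conflict d d'} \<le> card Ctr" for d
    using conflict_degree_bound[OF sep Ctr(2)] Ctr(3) unfolding ball_def by blast
  have "\<exists>col. (\<forall>d\<in>D. col d \<le> card Ctr) \<and> (\<forall>d\<in>D. \<forall>d'\<in>D. conflict d d' \<longrightarrow> col d \<noteq> col d')"
    by (rule bounded_degree_colouring) (use conflict_sym conflict_irrefl deg in blast)+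
  then show ?thesis by blast
qed

definition rho_lipschitz :: "('g \<times> nat \<Rightarrow> real) \<Rightarrow> bool" where
  "rho_lipschitz \<psi> \<longleftrightarrow> (\<forall>x y k. \<bar>\<psi> (x, k) - \<psi> (y, k)\<bar> \<le> 2 * rho x y)"

definition displaces :: "nat \<Rightarrow> ('g \<times> nat \<Rightarrow> real) \<Rightarrow> bool" where
  "displaces n \<psi> \<longleftrightarrow> (\<forall>y. \<exists>k\<le>n. 1/2 \<le> \<psi> (h + y, k) - \<psi> (y, k))"

definition colour_dist :: "'g set \<Rightarrow> ('g \<Rightarrow> nat) \<Rightarrow> 'g \<times> nat \<Rightarrow> real" where
  "colour_dist D col p = Inf (insert 1 ((\<lambda>d. 2 * rho (fst p) d) ` {d\<in>D. col d = snd p}))"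

lemma colour_dist_bdd: "bdd_below (insert 1 ((\<lambda>d. 2 * rho y d) ` S))"
  by (rule bdd_belowI[where m=0]) (auto intro: rho_nonneg)

lemma colour_dist_le1: "colour_dist D col (y, k) \<le> 1"
  unfolding colour_dist_def by (rule cInf_lower[OF _ colour_dist_bdd]) simp

lemma colour_dist_nonneg: "0 \<le> colour_dist D col (y, k)"
  unfolding colour_dist_def by (rule cInf_greatest) (auto intro: rho_nonneg)

lemma colour_dist_le:
  assumes "d \<in> D" "col d = k"
  shows "colour_dist D col (y, k) \<le> 2 * rho y d"
  unfolding colour_dist_def by (rule cInf_lower[OF _ colour_dist_bdd]) (use assms in auto)

lemma colour_dist_far:
  assumes "\<And>d. d \<in> D \<Longrightarrow> col d = k \<Longrightarrow> 1/2 \<le> rho y d"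
  shows "1 \<le> colour_dist D col (y, k)"
  unfolding colour_dist_def by (rule cInf_greatest) (use assms in force)+

lemma colour_dist_lipschitz: "rho_lipschitz (colour_dist D col)"
proof -
  have le: "colour_dist D col (x, k) \<le> colour_dist D col (y, k) + 2 * rho x y" for x y k
  proof -
    have "colour_dist D col (x, k) - 2 * rho x y \<le> colour_dist D col (y, k)"
      unfolding colour_dist_def[of D col "(y, k)"]
    proof (rule cInf_greatest)
      fix e assume "e \<in> insert 1 ((\<lambda>d. 2 * rho (fst (y, k)) d) ` {d\<in>D. col d = snd (y, k)})"
      then consider "e = 1" | d where "d \<in> D" "col d = k" "e = 2 * rho y d" by auto
      then show "colour_dist D col (x, k) - 2 * rho x y \<le> e"
      proof cases
        case 1 then show ?thesis using colour_dist_le1[of D col x k] rho_nonneg[of x y] by simp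
      next
        case 2 then show ?thesis using colour_dist_le[of d D col k x] rho_tri[of x d y] by simp
      qed
    qed simp
    then show ?thesis by simp
  qed
  show ?thesis
    unfolding rho_lipschitz_def
  proof (intro allI)
    fix x y k
    show "\<bar>colour_dist D col (x, k) - colour_dist D col (y, k)\<bar> \<le> 2 * rho x y"
      using le[of x k y] le[of y k x] rho_sym[of x y] by linarith
  qed
qed

(* The key estimate: if y is within 1/4 of a centre d of colour k, then h + y is at distance
   at least 1/2 from every centre of colour k, since such a centre would conflict with d. *)
lemma colour_dist_displaces:
  assumes sep: "\<forall>d\<in>D. \<forall>d'\<in>D. d \<noteq> d' \<longrightarrow> 1/4 \<le> rho d d'"
    and cov: "\<forall>y. \<exists>d\<in>D. rho y d < 1/4"
    and col: "\<forall>d\<in>D. col d \<le> n" "\<forall>d\<in>D. \<forall>d'\<in>D. conflict d d' \<longrightarrow> col d \<noteq> col d'"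
  shows "displaces n (colour_dist D col)"
  unfolding displaces_def
proof
  fix y
  obtain d where d: "d \<in> D" "rho y d < 1/4" using cov by blast
  have "1/2 \<le> rho (h + y) d'" if d': "d' \<in> D" "col d' = col d" for d'
  proof (rule ccontr)
    assume "\<not> 1/2 \<le> rho (h + y) d'"
    then have close: "rho (h + y) d' < 1/2" by simp
    have "d \<noteq> d'"
    proof
      assume "d = d'"
      then have "rho (h + y) y < 1/2 + 1/4"
        using close d(2) rho_tri[of "h + y" y d] rho_sym[of y d] by simp
      moreover have "rho (h + y) y = 1" using rho_inv[of h y 0] rho_h by simp
      ultimately show False by simp
    qed
    moreover have "d' - d \<in> C1" using C0_mem[OF d(2) close] unfolding C1_def by blast
    ultimately have "conflict d d'" unfolding conflict_def by blast
    then have "col d \<noteq> col d'" using col(2) d(1) d'(1) by blast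
    then show False using d'(2) by simp
  qed
  then have "1 \<le> colour_dist D col (h + y, col d)" by (rule colour_dist_far) simp
  moreover have "colour_dist D col (y, col d) < 1/2" using colour_dist_le[of d D col "col d" y] d by simp
  ultimately show "\<exists>k\<le>n. 1/2 \<le> colour_dist D col (h + y, k) - colour_dist D col (y, k)"
    using col(1) d(1) by (intro exI[of _ "col d"]) auto
qed

lemma displacing_function_exists:
  "\<exists>n \<phi>. (\<forall>p. 0 \<le> \<phi> p \<and> \<phi> p \<le> 1) \<and> rho_lipschitz \<phi> \<and> displaces n \<phi>"
proof -
  obtain D where sep: "\<forall>d\<in>D. \<forall>d'\<in>D. d \<noteq> d' \<longrightarrow> 1/4 \<le> rho d d'"
    and cov: "\<forall>y. \<exists>d\<in>D. rho y d < 1/4"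
    using maximal_separated_set[of rho "1/4", OF _ rho_sym] rho_refl by force
  obtain n :: nat and col where "\<forall>d\<in>D. col d \<le> n" "\<forall>d\<in>D. \<forall>d'\<in>D. conflict d d' \<longrightarrow> col d \<noteq> col d'"
    using conflict_graph_colouring[OF sep] by blast
  then have "displaces n (colour_dist D col)" using colour_dist_displaces[OF sep cov] by blast
  moreover have "0 \<le> colour_dist D col p \<and> colour_dist D col p \<le> 1" for p
    using colour_dist_nonneg[of D col "fst p" "snd p"] colour_dist_le1[of D col "fst p" "snd p"] by simp
  ultimately show ?thesis using colour_dist_lipschitz by blast
qed

(* Joint continuity of (g, \<psi>) \<mapsto> \<psi> (y + g, k) on rho-Lipschitz functions: the variation in g
   is controlled by the Lipschitz bound, the variation in \<psi> by the product topology. *)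
lemma shift_coordinate_continuous:
  assumes S: "\<And>\<psi>. \<psi> \<in> S \<Longrightarrow> rho_lipschitz \<psi>"
  shows "continuous_map (prod_topology euclidean (subtopology unit_cube S)) euclideanreal
           (\<lambda>(g, \<psi>). \<psi> (y + g, k))"
proof (rule continuous_map_real_epsilon, clarify)
  fix g0 :: 'g and \<psi>0 :: "'g \<times> nat \<Rightarrow> real" and e :: real
  assume z: "(g0, \<psi>0) \<in> topspace (prod_topology euclidean (subtopology unit_cube S))" and e: "e > 0"
  define V where "V = (\<lambda>g. y + g) -` {v. rho v (y + g0) < e/4}"
  define W where
    "W = {\<psi> \<in> topspace (subtopology unit_cube S). \<psi> (y + g0, k) \<in> ball (\<psi>0 (y + g0, k)) (e/2)}"
  have "open V" unfolding V_def by (rule open_vimage[OF rho_ball_open]) (intro continuous_intros)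
  moreover have "openin (subtopology unit_cube S) W"
  proof -
    have "continuous_map (subtopology unit_cube S) euclideanreal (\<lambda>\<psi>. \<psi> (y + g0, k))"
      by (rule continuous_map_from_subtopology[OF continuous_map_unit_cube_coordinate])
    then show ?thesis unfolding W_def by (rule openin_continuous_map_preimage) simp
  qed
  ultimately have "openin (prod_topology euclidean (subtopology unit_cube S)) (V \<times> W)"
    by (simp add: openin_prod_Times_iff)
  moreover have "(g0, \<psi>0) \<in> V \<times> W" using z e by (simp add: V_def W_def rho_refl)
  moreover have "\<bar>\<psi> (y + g, k) - \<psi>0 (y + g0, k)\<bar> < e" if "(g, \<psi>) \<in> V \<times> W" for g \<psi>
  proof -
    have "rho (y + g) (y + g0) < e/4" "\<psi> \<in> S" "\<bar>\<psi> (y + g0, k) - \<psi>0 (y + g0, k)\<bar> < e/2"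
      using that by (auto simp: V_def W_def dist_real_def abs_minus_commute)
    moreover have "\<bar>\<psi> (y + g, k) - \<psi> (y + g0, k)\<bar> \<le> 2 * rho (y + g) (y + g0)"
      using S[OF \<open>\<psi> \<in> S\<close>] unfolding rho_lipschitz_def by blast
    ultimately show ?thesis by linarith
  qed
  ultimately show "\<exists>U. openin (prod_topology euclidean (subtopology unit_cube S)) U \<and> (g0, \<psi>0) \<in> U \<and>
      (\<forall>z\<in>U. \<bar>(case z of (g, \<psi>) \<Rightarrow> \<psi> (y + g, k)) - \<psi>0 (y + g0, k)\<bar> < e)"
    by (intro exI[of _ "V \<times> W"]) auto
qed

definition free_carrier :: "nat \<Rightarrow> ('g \<times> nat \<Rightarrow> real) set" where
  "free_carrier n = {\<psi> \<in> topspace unit_cube. rho_lipschitz \<psi> \<and> displaces n \<psi>}"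

(* Both defining conditions are intersections of closed conditions on finitely many coordinates. *)
lemma closedin_free_carrier: "closedin unit_cube (free_carrier n)"
proof -
  have coord: "continuous_map unit_cube euclideanreal (\<lambda>\<psi>. \<psi> (x, k) - \<psi> (y, k))"
    for x y :: 'g and k :: nat
    by (intro continuous_map_diff continuous_map_unit_cube_coordinate)
  define A where "A x y k = {\<psi> \<in> topspace unit_cube. \<bar>\<psi> (x, k) - \<psi> (y, k)\<bar> \<in> {..2 * rho x y}}"
    for x y :: 'g and k :: nat
  define B where "B y k = {\<psi> \<in> topspace unit_cube. \<psi> (h + y, k) - \<psi> (y, k) \<in> {1/2..}}"
    for y :: 'g and k :: nat
  have "closedin unit_cube (A x y k)" for x y k
    unfolding A_def by (rule closedin_continuous_map_preimage) (auto intro: continuous_map_real_abs coord)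
  moreover have "closedin unit_cube (B y k)" for y k
    unfolding B_def by (rule closedin_continuous_map_preimage[OF coord]) simp
  moreover have "free_carrier n =
      topspace unit_cube \<inter> (\<Inter>x. \<Inter>y. \<Inter>k. A x y k) \<inter> (\<Inter>y. \<Union>k\<in>{..n}. B y k)"
    unfolding free_carrier_def rho_lipschitz_def displaces_def A_def B_def by auto
  ultimately show ?thesis
    by (auto intro!: closedin_Int closedin_INT closedin_Union simp del: atLeast_iff atMost_iff)
qed

(* The carrier is invariant under translation, by right-invariance of rho. *)
lemma shift_free_carrier:
  assumes "\<psi> \<in> free_carrier n"
  shows "shift g \<psi> \<in> free_carrier n"
  unfolding free_carrier_def
proof (intro CollectI conjI)
  show "shift g \<psi> \<in> topspace unit_cube"
    using assms by (simp add: free_carrier_def topspace_unit_cube shift_def)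
  show "rho_lipschitz (shift g \<psi>)"
    unfolding rho_lipschitz_def
  proof (intro allI)
    fix x y k
    have "\<bar>\<psi> (x + g, k) - \<psi> (y + g, k)\<bar> \<le> 2 * rho (x + g) (y + g)"
      using assms unfolding free_carrier_def rho_lipschitz_def by blast
    then show "\<bar>shift g \<psi> (x, k) - shift g \<psi> (y, k)\<bar> \<le> 2 * rho x y" by (simp add: rho_inv)
  qed
  show "displaces n (shift g \<psi>)"
    unfolding displaces_def
  proof
    fix y
    obtain k where "k \<le> n" "1/2 \<le> \<psi> (h + (y + g), k) - \<psi> (y + g, k)"
      using assms unfolding free_carrier_def displaces_def by blast
    then show "\<exists>k\<le>n. 1/2 \<le> shift g \<psi> (h + y, k) - shift g \<psi> (y, k)"
      by (auto simp: add.assoc)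
  qed
qed

(* Displacement at y = 0 shows that h fixes no point of the carrier. *)
lemma shift_h_not_fixed:
  assumes "\<psi> \<in> free_carrier n"
  shows "shift h \<psi> \<noteq> \<psi>"
proof
  assume "shift h \<psi> = \<psi>"
  obtain k where "1/2 \<le> \<psi> (h + 0, k) - \<psi> (0, k)"
    using assms unfolding free_carrier_def displaces_def by blast
  moreover have "\<psi> (h + 0, k) = \<psi> (0, k)"
    using fun_cong[OF \<open>shift h \<psi> = \<psi>\<close>, of "(0, k)"] by simp
  ultimately show False by simp
qed

lemma G_space_free_carrier:
  assumes "free_carrier n \<noteq> {}"
  shows "G_space (subtopology unit_cube (free_carrier n)) shift"
  unfolding G_space_def
proof (intro conjI)
  let ?X = "subtopology unit_cube (free_carrier n)"
  have top: "topspace ?X = free_carrier n"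
    using closedin_subset[OF closedin_free_carrier] by auto
  show "topspace ?X \<noteq> {}" using assms top by simp
  show "compact_space ?X"
    by (rule compact_space_subtopology, rule closedin_compact_space[OF compact_space_unit_cube closedin_free_carrier])
  show "Hausdorff_space ?X" by (rule Hausdorff_space_subtopology[OF Hausdorff_space_unit_cube])
  show "\<forall>g. \<forall>x\<in>topspace ?X. shift g x \<in> topspace ?X" using shift_free_carrier top by simp
  show "\<forall>x\<in>topspace ?X. shift 0 x = x" by (simp add: shift_def)
  show "\<forall>g l. \<forall>x\<in>topspace ?X. shift (g + l) x = shift g (shift l x)" by (simp add: shift_def add.assoc)
  have "continuous_map (prod_topology euclidean ?X) unit_cube (\<lambda>(g, \<psi>). shift g \<psi>)"
  proof (rule continuous_map_into_unit_cube)
    show "(\<lambda>(g, \<psi>). shift g \<psi>) \<in> topspace (prod_topology euclidean ?X) \<rightarrow> topspace unit_cube"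
      using shift_free_carrier top by (auto simp: free_carrier_def)
    fix q :: "'g \<times> nat"
    obtain y k where q: "q = (y, k)" by (cases q)
    have "continuous_map (prod_topology euclidean ?X) euclideanreal (\<lambda>(g, \<psi>). \<psi> (y + g, k))"
      by (rule shift_coordinate_continuous) (simp add: free_carrier_def)
    then show "continuous_map (prod_topology euclidean ?X) euclideanreal
        (\<lambda>x. (case x of (g, \<psi>) \<Rightarrow> shift g \<psi>) q)"
      by (simp add: q case_prod_unfold)
  qed
  then show "continuous_map (prod_topology euclidean ?X) ?X (\<lambda>(g, \<psi>). shift g \<psi>)"
    using shift_free_carrier top by (auto simp: continuous_map_in_subtopology)
qed

lemma free_G_space:
  "\<exists>(X :: ('g \<times> nat \<Rightarrow> real) topology) a. G_space X a \<and> (\<forall>x\<in>topspace X. a h x \<noteq> x)"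
proof -
  obtain n \<phi> where "\<forall>p. 0 \<le> \<phi> p \<and> \<phi> p \<le> 1" "rho_lipschitz \<phi>" "displaces n \<phi>"
    using displacing_function_exists by blast
  then have "\<phi> \<in> free_carrier n" by (simp add: free_carrier_def topspace_unit_cube)
  then have "G_space (subtopology unit_cube (free_carrier n)) shift"
    by (intro G_space_free_carrier) blast
  moreover have "topspace (subtopology unit_cube (free_carrier n)) \<subseteq> free_carrier n" by simp
  ultimately show ?thesis using shift_h_not_fixed by blast
qed

end

lemma bump_exists:
  fixes h :: "'g::{topological_group_add,t2_space}"
  assumes lc: "locally_compact_space (euclidean :: 'g topology)" and h: "h \<noteq> 0"
  shows "\<exists>u K. bump u K h"
proof -
  obtain U K where "openin euclidean U" "compactin euclidean K" "(0::'g) \<in> U" "U \<subseteq> K"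
    using lc unfolding locally_compact_space_def by (metis topspace_euclidean UNIV_I)
  then have UK: "open U" "compact K" "(0::'g) \<in> U" "U \<subseteq> K"
    by (simp_all add: compactin_euclidean_iff)
  have "Hausdorff_space (euclidean :: 'g topology)"
    unfolding Hausdorff_space_def by (metis disjnt_def hausdorff open_openin)
  then have "completely_regular_space (euclidean :: 'g topology)"
    using lc locally_compact_regular_imp_completely_regular_space by blast
  moreover have "closedin euclidean ((UNIV - U) \<union> {h})"
    using UK(1) by (auto intro: closed_Un simp: closed_Diff)
  moreover have "disjnt {0} ((UNIV - U) \<union> {h})" using UK(3) h by auto
  ultimately obtain f where f: "continuous_map euclidean (top_of_set {0..1::real}) f"
    "f ` ((UNIV - U) \<union> {h}) \<subseteq> {0}" "f ` {0} \<subseteq> {1}"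
    using Urysohn_completely_regular_compact_closed[of 0 1 euclidean "{0}" "(UNIV - U) \<union> {h}"]
    by auto
  have "continuous_on UNIV f" using f(1)
    by (metis continuous_map_iff_continuous2 continuous_map_into_fulltopology)
  moreover have "\<forall>x. 0 \<le> f x \<and> f x \<le> 1" using f(1) by (auto simp: continuous_map_in_subtopology)
  moreover have "\<forall>x. f x \<noteq> 0 \<longrightarrow> x \<in> K" using f(2) UK(4) by blast
  moreover have "f 0 = 1" "f h = 0" using f(2,3) by auto
  ultimately have "bump f K h" using UK(2) by unfold_locales auto
  then show ?thesis by blast
qed

lemma free_G_space_exists:
  fixes h :: "'g::{topological_group_add,t2_space}"
  assumes "locally_compact_space (euclidean :: 'g topology)" and "h \<noteq> 0"
  shows "\<exists>(X :: ('g \<times> nat \<Rightarrow> real) topology) a. G_space X a \<and> (\<forall>x\<in>topspace X. a h x \<noteq> x)"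
proof -
  obtain u K where "bump u K h" using bump_exists[OF assms] by blast
  then show ?thesis by (rule bump.free_G_space)
qed

theorem mainTheorem2:
  fixes H :: "'g::{topological_group_add, t2_space} set"
  assumes "locally_compact_space (euclidean :: 'g topology)"
    and "\<not> compact (UNIV :: 'g set)"
    and "is_subgroup H"
    and "{0} \<subset> H"
  shows "\<not> rel_ext_amenable TYPE('g set set) H"
proof -
  obtain h where h: "h \<in> H" "h \<noteq> 0" using assms(4) by blast
  obtain X :: "('g \<times> nat \<Rightarrow> real) topology" and a
    where X: "G_space X a" "\<forall>x\<in>topspace X. a h x \<noteq> x"
    using free_G_space_exists[OF assms(1) h(2)] by blast
  have "infinite (UNIV :: 'g set)" using assms(2) finite_imp_compact by blast
  then obtain c :: "('g \<times> nat \<Rightarrow> real) \<Rightarrow> 'g set" where "inj c"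
    using inj_functions_into_Pow by blast
  then have "inj (\<lambda>\<psi>. {c \<psi>})" by (simp add: inj_def)
  from not_rel_ext_amenableI[OF X(1) this h(1) X(2)] show ?thesis .
qed

end
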